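(* Let $Y_1,Y_2,\ldots,Y_n$ be $n$ independent random variables such that $Y_j$ follows the Mittag-Leffler distribution with distribution function $F_{Y_j}(t)=1-E_{\nu_j}(-\lambda_jt^{\nu_j})$, $t\ge0$, where $\lambda_j>0$, $0<\nu_j\leq1$ for $1\leq j\leq n$, and $\nu_1=\lambda_n=1$. Then the density function of $W=Y_1+Y_2+\cdots+Y_n$ is $$f_W(t)=(-1)^{n-1}\lambda_1\sum_{k=n-1}^{\infty}(-1)^k\sum_{\Lambda^k_n}\frac{t^{k_1+\sum_{j=2}^nk_j\nu_j}\prod_{j=1}^{n-1}\lambda_j^{k_j}}{\Gamma\big(1+k_1+\sum_{j=2}^nk_j\nu_j\big)},\qquad t\geq0,$$ where $\Lambda^k_n=\{(k_1,k_2,\ldots,k_n):\ \sum_{j=1}^nk_j=k,\ k_1\in\mathbb{N}_0,\ k_j\in\mathbb{N}_0\setminus\{0\} \text{ for } 2\leq j\leq n\}$.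
   Context: $\mathbb{N}_0$ denotes the set of nonnegative integers. $E_{\beta}(x)=\sum_{k=0}^{\infty}\frac{x^k}{\Gamma(k\beta+1)}$ is the Mittag-Leffler function. *)

theory Defs
  imports "HOL-Probability.Probability"
begin

definition mittag_leffler :: "real \<Rightarrow> real \<Rightarrow> real" where
  "mittag_leffler \<beta> x = (\<Sum>k. x ^ k / Gamma (real k * \<beta> + 1))"

definition pow0 :: "real \<Rightarrow> real \<Rightarrow> real" where
  "pow0 t a = (if a = 0 then 1 else t powr a)"

definition Lambda_set :: "nat \<Rightarrow> nat \<Rightarrow> (nat \<Rightarrow> nat) set" where
  "Lambda_set n k = {\<kappa>. (\<forall>j. j \<notin> {1..n} \<longrightarrow> \<kappa> j = 0) \<and>
                         (\<forall>j\<in>{2..n}. 1 \<le> \<kappa> j) \<and> (\<Sum>j=1..n. \<kappa> j) = k}"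

definition fW_term :: "nat \<Rightarrow> (nat \<Rightarrow> real) \<Rightarrow> (nat \<Rightarrow> real) \<Rightarrow> real \<Rightarrow> nat \<Rightarrow> real" where
  "fW_term n lam nu t k = (-1) ^ k *
     (\<Sum>\<kappa>\<in>Lambda_set n k.
        pow0 t (real (\<kappa> 1) + (\<Sum>j=2..n. real (\<kappa> j) * nu j)) * (\<Prod>j=1..n-1. lam j ^ \<kappa> j)
        / Gamma (1 + real (\<kappa> 1) + (\<Sum>j=2..n. real (\<kappa> j) * nu j)))"

end

(*
  Each Y_j has the density  f_j t = (SUM k>=1. (-1)^(k+1) lam_j^k g (k nu_j) t)  for t > 0, a series
  in the gamma kernels  g a t = t^(a-1) / Gamma a,  which satisfy  g a * g b = g (a + b)  under
  convolution (a Beta integral).  Since 1 / Gamma decays superexponentially, all these series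
  converge absolutely, so the density of a sum of independent Y_j, the convolution of the f_j, can
  be computed term by term: it is a series of kernels g (SUM_j kappa_j nu_j) indexed by the vectors
  kappa of expansion orders, i.e. by compositions with positive parts.  For the sum over j = 1..n,
  with nu_1 = lam_n = 1, lowering kappa_1 by one turns this series into the stated one.
*)
theory Submission
  imports Defs "HOL-Real_Asymp.Real_Asymp"
begin

section \<open>Gamma kernels\<close>

definition gamma_kernel :: "real \<Rightarrow> real \<Rightarrow> real" where
  "gamma_kernel a t = (if 0 < t then t powr (a - 1) / Gamma a else 0)"

lemma gamma_kernel_nonneg: "0 < a \<Longrightarrow> 0 \<le> gamma_kernel a t"
  by (simp add: gamma_kernel_def Gamma_real_pos)

lemma gamma_kernel_nonpos [simp]: "t \<le> 0 \<Longrightarrow> gamma_kernel a t = 0"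
  by (simp add: gamma_kernel_def)

lemma borel_measurable_gamma_kernel [measurable]: "gamma_kernel a \<in> borel_measurable borel"
  unfolding gamma_kernel_def by measurable

lemma continuous_on_gamma_kernel:
  assumes "0 < a"
  shows "continuous_on {a..b} (gamma_kernel e)"
proof -
  have "continuous_on {a..b} (\<lambda>t. t powr (e - 1) * inverse (Gamma e))"
    by (intro continuous_on_mult_right continuous_on_powr' continuous_on_id continuous_on_const)
       (use assms in auto)
  then show ?thesis
    by (rule continuous_on_eq) (use assms in \<open>auto simp: gamma_kernel_def divide_inverse\<close>)
qed

lemma gamma_kernel_convolution_has_integral:
  assumes a: "0 < a" and b: "0 < b"
  shows "((\<lambda>y. gamma_kernel a (x - y) * gamma_kernel b y) has_integral gamma_kernel (a + b) x) UNIV"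
proof (cases "0 < x")
  case False
  then have "(\<lambda>y. gamma_kernel a (x - y) * gamma_kernel b y) = (\<lambda>_. 0)"
    by (auto simp: gamma_kernel_def fun_eq_iff)
  with False show ?thesis by simp
next
  case x: True
  let ?f = "\<lambda>s::real. s powr (b - 1) * (1 - s) powr (a - 1)"
  let ?c = "x powr (a + b - 2) / (Gamma a * Gamma b)"
  have "((\<lambda>y. ?f ((1/x) *\<^sub>R y + 0)) has_integral (Beta b a /\<^sub>R (1/x) ^ DIM(real)))
          (cbox ((0 - 0) /\<^sub>R (1/x)) ((1 - 0) /\<^sub>R (1/x)))"
    using has_integral_Beta_real[OF b a] x by (intro has_integral_affinity') simp_all
  then have "((\<lambda>y. ?c * ?f (y / x)) has_integral (?c * (x * Beta b a))) {0..x}"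
    by (intro has_integral_mult_right) simp
  moreover have "?c * (x * Beta b a) = gamma_kernel (a + b) x"
  proof -
    have "x powr (a + b - 1) = x powr ((a + b - 2) + 1)" by simp
    also have "\<dots> = x powr (a + b - 2) * x powr 1" by (rule powr_add)
    finally have "x powr (a + b - 2) * x = x powr (a + b - 1)"
      using x by simp
    moreover have "Gamma a > 0" "Gamma b > 0" "Gamma (a + b) > 0"
      using a b by (auto intro: Gamma_real_pos)
    ultimately show ?thesis using x
      by (simp add: gamma_kernel_def Beta_def field_simps)
  qed
  ultimately have "((\<lambda>y. ?c * ?f (y / x)) has_integral gamma_kernel (a + b) x) {0..x}"
    by simp
  then have "((\<lambda>y. gamma_kernel a (x - y) * gamma_kernel b y) has_integral gamma_kernel (a + b) x) {0..x}"
  proof (rule has_integral_spike[rotated 2])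
    fix y assume "y \<in> {0..x} - {0, x}"
    then have y: "0 < y" "y < x" by auto
    have "?f (y / x) = (y / x) powr (b - 1) * ((x - y) / x) powr (a - 1)"
      using x by (simp add: field_simps)
    also have "\<dots> = y powr (b - 1) * (x - y) powr (a - 1) / (x powr (b - 1) * x powr (a - 1))"
      using x y by (simp add: powr_divide)
    also have "x powr (b - 1) * x powr (a - 1) = x powr (a + b - 2)"
      using x by (simp add: powr_add [symmetric] add.commute)
    finally show "gamma_kernel a (x - y) * gamma_kernel b y = ?c * ?f (y / x)"
      using x y by (simp add: gamma_kernel_def field_simps)
  qed simp
  then show ?thesis
    by (rule has_integral_on_superset) (auto simp: gamma_kernel_def)
qed

lemma gamma_kernel_convolution:
  assumes "0 < a" "0 < b"
  shows "integrable lborel (\<lambda>y. gamma_kernel a (x - y) * gamma_kernel b y)"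
    and "(\<integral>y. gamma_kernel a (x - y) * gamma_kernel b y \<partial>lborel) = gamma_kernel (a + b) x"
proof -
  have nonneg: "0 \<le> gamma_kernel a (x - y) * gamma_kernel b y" for y
    using assms by (intro mult_nonneg_nonneg gamma_kernel_nonneg)
  have "(\<integral>\<^sup>+y. ennreal (gamma_kernel a (x - y) * gamma_kernel b y) \<partial>lborel) = ennreal (gamma_kernel (a + b) x)"
    by (rule nn_integral_has_integral_lborel[OF _ _ gamma_kernel_convolution_has_integral[OF assms]])
       (use nonneg in auto)
  then have "integrable lborel (\<lambda>y. gamma_kernel a (x - y) * gamma_kernel b y) \<and>
      (\<integral>y. gamma_kernel a (x - y) * gamma_kernel b y \<partial>lborel) = gamma_kernel (a + b) x"
    by (rule nn_integral_eq_integrable[THEN iffD1, rotated 3]) (use nonneg assms in \<open>auto intro: gamma_kernel_nonneg\<close>)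
  then show "integrable lborel (\<lambda>y. gamma_kernel a (x - y) * gamma_kernel b y)"
    and "(\<integral>y. gamma_kernel a (x - y) * gamma_kernel b y \<partial>lborel) = gamma_kernel (a + b) x"
    by auto
qed

text \<open>On [a, a + 1] the integrand of Gamma a is at least a powr (a - 1) * exp (- (a + 1)).\<close>
lemma Gamma_real_lower_bound:
  fixes a :: real
  assumes a: "1 \<le> a"
  shows "a powr (a - 1) * exp (- (a + 1)) \<le> Gamma a"
proof -
  let ?f = "\<lambda>t::real. t powr (a - 1) / exp t"
  have I: "(?f has_integral Gamma a) {0..}" using Gamma_integral_real a by simp
  have int: "?f integrable_on {a..a+1}"
    by (rule integrable_continuous_interval) (use a in \<open>auto intro!: continuous_intros\<close>)
  have "a powr (a - 1) * exp (- (a + 1)) = integral {a..a+1} (\<lambda>_. a powr (a - 1) * exp (- (a + 1)))"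
    by simp
  also have "\<dots> \<le> integral {a..a+1} ?f"
  proof (rule integral_le)
    fix t assume t: "t \<in> {a..a+1}"
    have "a powr (a - 1) \<le> t powr (a - 1)" using a t by (intro powr_mono2) auto
    moreover have "exp (- (a + 1)) \<le> exp (- t)" using t by simp
    then have "exp (- (a + 1)) \<le> 1 / exp t" by (simp add: exp_minus inverse_eq_divide)
    ultimately show "a powr (a - 1) * exp (- (a + 1)) \<le> ?f t"
      using mult_mono[of "a powr (a - 1)" "t powr (a - 1)" "exp (- (a + 1))" "1 / exp t"] by simp
  qed (use int in auto)
  also have "\<dots> \<le> integral {0..} ?f"
    by (rule integral_subset_le) (use a I int in \<open>auto simp: has_integral_integrable\<close>)
  also have "\<dots> = Gamma a" using I by (simp add: integral_unique)
  finally show ?thesis .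
qed

lemma inverse_Gamma_le_exp:
  fixes n :: nat and \<nu> e :: real
  assumes "1 \<le> \<nu> * n" and "\<nu> * n \<le> e" and "e \<le> n + 1"
  shows "1 / Gamma e \<le> exp (real n + 2 + ln (real n + 1) - \<nu> * real n * ln (\<nu> * real n))"
proof -
  have e: "1 \<le> e" using assms by linarith
  have "1 / Gamma e \<le> 1 / (e powr (e - 1) * exp (- (e + 1)))"
    using Gamma_real_lower_bound[OF e] e by (intro divide_left_mono) auto
  also have "\<dots> = exp (e + 1 - (e - 1) * ln e)"
    using e by (simp add: powr_def exp_diff exp_minus field_simps exp_add)
  also have "\<dots> \<le> exp (real n + 2 + ln (real n + 1) - \<nu> * real n * ln (\<nu> * real n))"
  proof -
    have "ln (\<nu> * n) \<le> ln e" using assms by simp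
    then have "\<nu> * n * ln (\<nu> * n) \<le> e * ln e"
      using assms by (intro mult_mono) auto
    moreover have "ln e \<le> ln (real n + 1)" using e assms by simp
    ultimately show ?thesis using assms by (simp add: algebra_simps del: ln_le_cancel_iff)
  qed
  finally show ?thesis .
qed

lemma summable_exp_superlinear_decay:
  fixes A B q \<nu> :: real
  assumes "0 < \<nu>"
  shows "summable (\<lambda>n::nat. exp (A + B * n + q * ln (n + 1) - \<nu> * n * ln (\<nu> * n)))"
proof (rule summable_comparison_test_ev[OF _ summable_geometric[of "1/2"]])
  let ?e = "\<lambda>y. exp (A + B * y + q * ln (y + 1) - \<nu> * y * ln (\<nu> * y))"
  have "((\<lambda>y. ?e y * exp (y * ln 2)) \<longlongrightarrow> 0) at_top"
    using assms by real_asymp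
  then have "((\<lambda>n::nat. ?e n * exp (n * ln 2)) \<longlongrightarrow> 0) sequentially"
    by (rule filterlim_compose[OF _ filterlim_real_sequentially])
  then have "eventually (\<lambda>n::nat. ?e n * exp (n * ln 2) < 1) sequentially"
    by (rule order_tendstoD) simp
  then show "eventually (\<lambda>n. norm (?e n) \<le> (1/2) ^ n) sequentially"
    by eventually_elim (simp add: exp_of_nat_mult field_simps power_divide)
qed simp

lemma gamma_kernel_le_exp:
  fixes n :: nat and x \<nu> e :: real
  assumes x: "0 < x" and "1 \<le> \<nu> * n" "\<nu> * n \<le> e" "e \<le> n + 1"
  shows "gamma_kernel e x \<le> max 1 x ^ (n + 1) / x * exp (real n + 2 + ln (real n + 1) - \<nu> * real n * ln (\<nu> * real n))"
proof -
  have e: "0 < e" using assms by linarith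
  have "x powr (e - 1) = x powr e / x" using x by (simp add: powr_diff)
  also have "x powr e \<le> max 1 x powr e" using x e by (intro powr_mono2) auto
  also have "max 1 x powr e \<le> max 1 x powr real (n + 1)" using assms by (intro powr_mono) auto
  also have "max 1 x powr real (n + 1) = max 1 x ^ (n + 1)" by (intro powr_realpow) simp
  finally have "x powr (e - 1) \<le> max 1 x ^ (n + 1) / x" using x by (simp add: divide_right_mono)
  moreover have "1 / Gamma e \<le> exp (real n + 2 + ln (real n + 1) - \<nu> * real n * ln (\<nu> * real n))"
    using inverse_Gamma_le_exp assms by simp
  moreover have "gamma_kernel e x = x powr (e - 1) * (1 / Gamma e)" using x by (simp add: gamma_kernel_def)
  moreover have "0 \<le> 1 / Gamma e" using e by (simp add: Gamma_real_pos less_imp_le)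
  ultimately show ?thesis
    using x by (simp only:) (rule mult_mono, auto)
qed

text \<open>
  The factor 1 / Gamma e with e \<ge> \<nu> n decays superexponentially; it beats both the polynomial
  growth of the number of summands and the geometric growth of the coefficients.
\<close>
lemma summable_gamma_kernel_sums:
  fixes I :: "nat \<Rightarrow> 'i set" and c e :: "'i \<Rightarrow> real" and p :: nat
  assumes card: "\<And>n. card (I n) \<le> (n + 1) ^ p"
    and nu: "0 < \<nu>" and L: "1 \<le> L"
    and c: "\<And>n i. i \<in> I n \<Longrightarrow> \<bar>c i\<bar> \<le> L ^ n"
    and e: "\<And>n i. i \<in> I n \<Longrightarrow> \<nu> * n \<le> e i \<and> e i \<le> n + 1 \<and> 0 < e i"
  shows "summable (\<lambda>n. \<Sum>i\<in>I n. \<bar>c i\<bar> * gamma_kernel (e i) x)"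
proof (cases "0 < x")
  case False
  then show ?thesis by simp
next
  case x: True
  define M where "M = max 1 x"
  define B where "B n = L ^ n * (M ^ (n + 1) / x *
    exp (real n + 2 + ln (real n + 1) - \<nu> * real n * ln (\<nu> * real n)))" for n :: nat
  have M: "1 \<le> M" by (simp add: M_def)
  have "(real n + 1) ^ p * B n = exp (ln x * (-1) + ln M + 2 + (ln L + ln M + 1) * real n +
      (real p + 1) * ln (real n + 1) - \<nu> * real n * ln (\<nu> * real n))" for n
  proof -
    have "0 < (real n + 1) ^ p * B n" using x L M by (simp add: B_def)
    then have "(real n + 1) ^ p * B n = exp (ln ((real n + 1) ^ p * B n))" by simp
    also have "ln ((real n + 1) ^ p * B n) = ln x * (-1) + ln M + 2 + (ln L + ln M + 1) * real n +
        (real p + 1) * ln (real n + 1) - \<nu> * real n * ln (\<nu> * real n)"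
      using x L M by (simp add: B_def ln_mult ln_div ln_realpow algebra_simps)
    finally show ?thesis .
  qed
  then have summable_bound: "summable (\<lambda>n. (real n + 1) ^ p * B n)"
    using summable_exp_superlinear_decay[OF nu] by simp
  have "eventually (\<lambda>n. 1 \<le> \<nu> * real n) sequentially"
    using nu by real_asymp
  then have "eventually (\<lambda>n. norm (\<Sum>i\<in>I n. \<bar>c i\<bar> * gamma_kernel (e i) x) \<le> (real n + 1) ^ p * B n) sequentially"
  proof eventually_elim
    case (elim n)
    have term_le: "\<bar>c i\<bar> * gamma_kernel (e i) x \<le> B n" if i: "i \<in> I n" for i
      unfolding B_def M_def using c[OF i] e[OF i] gamma_kernel_le_exp[OF x elim, of "e i"]
      by (intro mult_mono) (auto intro: gamma_kernel_nonneg)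
    have "norm (\<Sum>i\<in>I n. \<bar>c i\<bar> * gamma_kernel (e i) x) = (\<Sum>i\<in>I n. \<bar>c i\<bar> * gamma_kernel (e i) x)"
      using e by (simp add: sum_nonneg gamma_kernel_nonneg)
    also have "\<dots> \<le> real (card (I n)) * B n"
      using sum_bounded_above[of "I n" _ "B n"] term_le by auto
    also have "\<dots> \<le> (real n + 1) ^ p * B n"
    proof (rule mult_right_mono)
      show "real (card (I n)) \<le> (real n + 1) ^ p"
        using card[of n] by (metis of_nat_1 of_nat_add of_nat_le_iff of_nat_power)
    qed (use x L M in \<open>simp add: B_def\<close>)
    finally show ?case .
  qed
  then show ?thesis
    by (rule summable_comparison_test_ev[OF _ summable_bound])
qed

section \<open>Convolution of gamma kernel series\<close>

lemma gamma_kernel_convolution_Cauchy_sum: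
  fixes I :: "nat \<Rightarrow> 'i set" and e :: "'i \<Rightarrow> real" and I' :: "nat \<Rightarrow> 'j set" and e' :: "'j \<Rightarrow> real"
    and d :: "'i \<Rightarrow> 'j \<Rightarrow> real"
  assumes e: "\<And>k i. i \<in> I k \<Longrightarrow> 0 < e i" and e': "\<And>k i. i \<in> I' k \<Longrightarrow> 0 < e' i"
  shows "integrable lborel (\<lambda>y. \<Sum>m\<le>n. \<Sum>i\<in>I m. \<Sum>i'\<in>I' (n - m).
             d i i' * (gamma_kernel (e i) (x - y) * gamma_kernel (e' i') y))"
    and "(\<integral>y. (\<Sum>m\<le>n. \<Sum>i\<in>I m. \<Sum>i'\<in>I' (n - m).
             d i i' * (gamma_kernel (e i) (x - y) * gamma_kernel (e' i') y)) \<partial>lborel)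
         = (\<Sum>m\<le>n. \<Sum>i\<in>I m. \<Sum>i'\<in>I' (n - m). d i i' * gamma_kernel (e i + e' i') x)"
  using e e' by (simp_all add: Bochner_Integration.integral_sum Bochner_Integration.integrable_sum
      gamma_kernel_convolution)

text \<open>
  The convolution of two absolutely summable series of gamma kernels is computed termwise, the
  Cauchy product of the series serving as the integrable majorant.
\<close>
lemma gamma_kernel_series_convolution:
  fixes I :: "nat \<Rightarrow> 'i set" and c e :: "'i \<Rightarrow> real" and I' :: "nat \<Rightarrow> 'j set" and c' e' :: "'j \<Rightarrow> real"
  assumes e: "\<And>k i. i \<in> I k \<Longrightarrow> 0 < e i" and e': "\<And>k i. i \<in> I' k \<Longrightarrow> 0 < e' i"
    and summable_P: "\<And>t. summable (\<lambda>k. \<Sum>i\<in>I k. \<bar>c i\<bar> * gamma_kernel (e i) t)"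
    and summable_Q: "\<And>t. summable (\<lambda>k. \<Sum>i\<in>I' k. \<bar>c' i\<bar> * gamma_kernel (e' i) t)"
    and summable_R: "summable (\<lambda>n. \<Sum>m\<le>n. \<Sum>i\<in>I m. \<Sum>i'\<in>I' (n - m).
                       \<bar>c i * c' i'\<bar> * gamma_kernel (e i + e' i') x)"
  shows "integrable lborel (\<lambda>y. (\<Sum>k. \<Sum>i\<in>I k. c i * gamma_kernel (e i) (x - y)) *
                                (\<Sum>k. \<Sum>i\<in>I' k. c' i * gamma_kernel (e' i) y))"
    and "(\<integral>y. (\<Sum>k. \<Sum>i\<in>I k. c i * gamma_kernel (e i) (x - y)) *
              (\<Sum>k. \<Sum>i\<in>I' k. c' i * gamma_kernel (e' i) y) \<partial>lborel)
         = (\<Sum>n. \<Sum>m\<le>n. \<Sum>i\<in>I m. \<Sum>i'\<in>I' (n - m). c i * c' i' * gamma_kernel (e i + e' i') x)"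
proof -
  define p where "p k t = (\<Sum>i\<in>I k. c i * gamma_kernel (e i) t)" for k t
  define q where "q k t = (\<Sum>i\<in>I' k. c' i * gamma_kernel (e' i) t)" for k t
  define P where "P k t = (\<Sum>i\<in>I k. \<bar>c i\<bar> * gamma_kernel (e i) t)" for k t
  define Q where "Q k t = (\<Sum>i\<in>I' k. \<bar>c' i\<bar> * gamma_kernel (e' i) t)" for k t
  have P_nonneg: "0 \<le> P k t" and Q_nonneg: "0 \<le> Q k t" for k t
    unfolding P_def Q_def using e e' by (auto intro!: sum_nonneg mult_nonneg_nonneg gamma_kernel_nonneg)
  have norm_p: "norm (p k t) \<le> P k t" and norm_q: "norm (q k t) \<le> Q k t" for k t
    unfolding p_def P_def q_def Q_def real_norm_def using e e'
    by (auto intro!: order.trans[OF sum_abs] sum_mono simp: abs_mult abs_of_nonneg gamma_kernel_nonneg)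
  have summable_norm_p: "summable (\<lambda>k. norm (p k t))" for t
    by (rule summable_comparison_test[OF _ summable_P]) (use norm_p in \<open>auto simp: P_def\<close>)
  have summable_norm_q: "summable (\<lambda>k. norm (q k t))" for t
    by (rule summable_comparison_test[OF _ summable_Q]) (use norm_q in \<open>auto simp: Q_def\<close>)
  define f where "f n y = (\<Sum>m\<le>n. p m (x - y) * q (n - m) y)" for n y
  define F where "F n y = (\<Sum>m\<le>n. P m (x - y) * Q (n - m) y)" for n y
  have product_eq: "(\<lambda>y. (\<Sum>k. p k (x - y)) * (\<Sum>k. q k y)) = (\<lambda>y. \<Sum>n. f n y)"
    unfolding f_def using Cauchy_product_sums[OF summable_norm_p summable_norm_q]
    by (simp add: sums_iff fun_eq_iff)
  have f_expand: "f n y = (\<Sum>m\<le>n. \<Sum>i\<in>I m. \<Sum>i'\<in>I' (n - m).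
      (c i * c' i') * (gamma_kernel (e i) (x - y) * gamma_kernel (e' i') y))" for n y
    unfolding f_def p_def q_def sum_product by (intro sum.cong refl) (simp add: algebra_simps)
  have F_expand: "F n y = (\<Sum>m\<le>n. \<Sum>i\<in>I m. \<Sum>i'\<in>I' (n - m).
      \<bar>c i * c' i'\<bar> * (gamma_kernel (e i) (x - y) * gamma_kernel (e' i') y))" for n y
    unfolding F_def P_def Q_def sum_product by (intro sum.cong refl) (simp add: algebra_simps abs_mult)
  note f_conv = gamma_kernel_convolution_Cauchy_sum[where d = "\<lambda>i i'. c i * c' i'", OF e e']
  note F_conv = gamma_kernel_convolution_Cauchy_sum[where d = "\<lambda>i i'. \<bar>c i * c' i'\<bar>", OF e e']
  have f_integrable: "integrable lborel (f n)" for n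
    unfolding f_expand[abs_def] by (rule f_conv(1))
  have F_integrable: "integrable lborel (F n)" for n
    unfolding F_expand[abs_def] by (rule F_conv(1))
  have f_integral: "(\<integral>y. f n y \<partial>lborel) =
      (\<Sum>m\<le>n. \<Sum>i\<in>I m. \<Sum>i'\<in>I' (n - m). c i * c' i' * gamma_kernel (e i + e' i') x)" for n
    unfolding f_expand by (rule f_conv(2))
  have F_integral: "(\<integral>y. F n y \<partial>lborel) =
      (\<Sum>m\<le>n. \<Sum>i\<in>I m. \<Sum>i'\<in>I' (n - m). \<bar>c i * c' i'\<bar> * gamma_kernel (e i + e' i') x)" for n
    unfolding F_expand by (rule F_conv(2))
  have f_le_F: "norm (f n y) \<le> F n y" for n y
    unfolding f_def F_def
    by (intro order.trans[OF norm_sum] sum_mono)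
       (auto simp: abs_mult intro!: mult_mono norm_p[simplified] norm_q[simplified] P_nonneg Q_nonneg)
  have summable_F: "summable (\<lambda>n. F n y)" for y
    unfolding F_def
    by (rule sums_summable[OF Cauchy_product_sums])
       (use summable_P summable_Q P_nonneg Q_nonneg in \<open>simp_all add: P_def Q_def\<close>)
  have "AE y in lborel. summable (\<lambda>n. norm (f n y))"
    by (intro AE_I2 summable_comparison_test[OF _ summable_F]) (use f_le_F in auto)
  moreover have "summable (\<lambda>n. \<integral>y. norm (f n y) \<partial>lborel)"
  proof (rule summable_comparison_test[OF _ summable_R], intro exI allI impI)
    fix n
    have "norm (\<integral>y. norm (f n y) \<partial>lborel) = (\<integral>y. norm (f n y) \<partial>lborel)"
      by simp
    also have "\<dots> \<le> (\<integral>y. F n y \<partial>lborel)"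
      by (intro integral_mono f_le_F F_integrable integrable_norm f_integrable)
    finally show "norm (\<integral>y. norm (f n y) \<partial>lborel) \<le> (\<Sum>m\<le>n. \<Sum>i\<in>I m. \<Sum>i'\<in>I' (n - m).
        \<bar>c i * c' i'\<bar> * gamma_kernel (e i + e' i') x)"
      by (simp add: F_integral)
  qed
  ultimately show "integrable lborel (\<lambda>y. (\<Sum>k. \<Sum>i\<in>I k. c i * gamma_kernel (e i) (x - y)) *
                                (\<Sum>k. \<Sum>i\<in>I' k. c' i * gamma_kernel (e' i) y))"
    and "(\<integral>y. (\<Sum>k. \<Sum>i\<in>I k. c i * gamma_kernel (e i) (x - y)) *
              (\<Sum>k. \<Sum>i\<in>I' k. c' i * gamma_kernel (e' i) y) \<partial>lborel)
         = (\<Sum>n. \<Sum>m\<le>n. \<Sum>i\<in>I m. \<Sum>i'\<in>I' (n - m). c i * c' i' * gamma_kernel (e i + e' i') x)"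
    using product_eq integrable_suminf[OF f_integrable] integral_suminf[OF f_integrable] f_integral
    unfolding p_def q_def by simp_all
qed

section \<open>Compositions and the density of a sum\<close>

definition compositions :: "nat set \<Rightarrow> nat \<Rightarrow> (nat \<Rightarrow> nat) set" where
  "compositions J k = {\<kappa>. (\<forall>j. j \<notin> J \<longrightarrow> \<kappa> j = 0) \<and> (\<forall>j\<in>J. 1 \<le> \<kappa> j) \<and> (\<Sum>j\<in>J. \<kappa> j) = k}"

definition comp_coeff :: "(nat \<Rightarrow> real) \<Rightarrow> nat set \<Rightarrow> (nat \<Rightarrow> nat) \<Rightarrow> real" where
  "comp_coeff lam J \<kappa> = (\<Prod>j\<in>J. (-1) ^ (\<kappa> j + 1) * lam j ^ \<kappa> j)"

definition comp_order :: "(nat \<Rightarrow> real) \<Rightarrow> nat set \<Rightarrow> (nat \<Rightarrow> nat) \<Rightarrow> real" where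
  "comp_order nu J \<kappa> = (\<Sum>j\<in>J. real (\<kappa> j) * nu j)"

text \<open>The density of the sum of the Y j, j \<in> J; \<kappa> j is the expansion order of the factor Y j.\<close>
definition ml_sum_density :: "(nat \<Rightarrow> real) \<Rightarrow> (nat \<Rightarrow> real) \<Rightarrow> nat set \<Rightarrow> real \<Rightarrow> real" where
  "ml_sum_density lam nu J t =
     (\<Sum>k. \<Sum>\<kappa>\<in>compositions J k. comp_coeff lam J \<kappa> * gamma_kernel (comp_order nu J \<kappa>) t)"

lemma
  assumes J: "finite J"
  shows finite_compositions: "finite (compositions J k)"
    and card_compositions_le: "card (compositions J k) \<le> (k + 1) ^ card J"
proof -
  have inj: "inj_on (\<lambda>\<kappa>. restrict \<kappa> J) (compositions J k)"
  proof (rule inj_onI)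
    fix a b assume a: "a \<in> compositions J k" and b: "b \<in> compositions J k"
      and eq: "restrict a J = restrict b J"
    show "a = b"
    proof
      fix i show "a i = b i"
        using a b fun_cong[OF eq, of i] by (cases "i \<in> J") (auto simp: compositions_def)
    qed
  qed
  have "\<kappa> j \<le> k" if "\<kappa> \<in> compositions J k" "j \<in> J" for \<kappa> j
    using member_le_sum[of j J \<kappa>] J that by (auto simp: compositions_def)
  then have sub: "(\<lambda>\<kappa>. restrict \<kappa> J) ` compositions J k \<subseteq> PiE J (\<lambda>_. {..k})"
    by auto
  have fin: "finite (PiE J (\<lambda>_. {..k::nat}))" using J by (intro finite_PiE) auto
  show "finite (compositions J k)"
    using finite_imageD[OF finite_subset[OF sub fin] inj] .
  have "card (compositions J k) \<le> card (PiE J (\<lambda>_. {..k::nat}))"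
    using card_mono[OF fin sub] card_image[OF inj] by simp
  also have "\<dots> = (k + 1) ^ card J" using J by (simp add: card_PiE)
  finally show "card (compositions J k) \<le> (k + 1) ^ card J" .
qed

lemma compositions_eq_empty:
  assumes "finite J" "k < card J"
  shows "compositions J k = {}"
proof (rule ccontr)
  assume "compositions J k \<noteq> {}"
  then obtain \<kappa> where \<kappa>: "\<kappa> \<in> compositions J k" by auto
  have "card J = (\<Sum>j\<in>J. 1)" by simp
  also have "\<dots> \<le> (\<Sum>j\<in>J. \<kappa> j)" using \<kappa> by (intro sum_mono) (auto simp: compositions_def)
  also have "\<dots> = k" using \<kappa> by (simp add: compositions_def)
  finally show False using assms by simp
qed

lemma abs_comp_coeff_le:
  assumes \<kappa>: "\<kappa> \<in> compositions J k" and lam: "\<And>j. j \<in> J \<Longrightarrow> 0 < lam j \<and> lam j \<le> L"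
  shows "\<bar>comp_coeff lam J \<kappa>\<bar> \<le> L ^ k"
proof -
  have lam0: "0 \<le> lam j" and lamL: "lam j \<le> L" if "j \<in> J" for j
    using lam[OF that] by auto
  have "\<bar>comp_coeff lam J \<kappa>\<bar> = (\<Prod>j\<in>J. lam j ^ \<kappa> j)"
    unfolding comp_coeff_def abs_prod using lam0 by (intro prod.cong) (auto simp: abs_mult power_abs)
  also have "\<dots> \<le> (\<Prod>j\<in>J. L ^ \<kappa> j)"
    by (intro prod_mono conjI power_mono zero_le_power lam0 lamL)
  also have "\<dots> = L ^ k" using \<kappa> by (simp add: compositions_def flip: power_sum)
  finally show ?thesis .
qed

lemma comp_order_bounds:
  assumes J: "finite J" and \<kappa>: "\<kappa> \<in> compositions J k"
    and nu: "\<And>j. j \<in> J \<Longrightarrow> \<nu> \<le> nu j \<and> nu j \<le> 1"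
  shows "\<nu> * k \<le> comp_order nu J \<kappa>" and "comp_order nu J \<kappa> \<le> k"
proof -
  have k: "real k = (\<Sum>j\<in>J. real (\<kappa> j))"
    using \<kappa> by (simp add: compositions_def flip: of_nat_sum)
  have "\<nu> * k = (\<Sum>j\<in>J. real (\<kappa> j) * \<nu>)" unfolding k by (simp add: sum_distrib_left mult.commute)
  also have "\<dots> \<le> comp_order nu J \<kappa>" unfolding comp_order_def using nu by (intro sum_mono mult_left_mono) auto
  finally show "\<nu> * k \<le> comp_order nu J \<kappa>" .
  have "comp_order nu J \<kappa> \<le> (\<Sum>j\<in>J. real (\<kappa> j) * 1)"
    unfolding comp_order_def using nu by (intro sum_mono mult_left_mono) auto
  then show "comp_order nu J \<kappa> \<le> k" using k by simp
qed

lemma comp_order_pos: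
  assumes J: "finite J" "J \<noteq> {}" and \<kappa>: "\<kappa> \<in> compositions J k" and nu: "\<And>j. j \<in> J \<Longrightarrow> 0 < nu j"
  shows "0 < comp_order nu J \<kappa>"
proof -
  obtain j where j: "j \<in> J" using J by auto
  have "0 < real (\<kappa> j) * nu j" using \<kappa> j nu[OF j] by (auto simp: compositions_def)
  also have "\<dots> \<le> comp_order nu J \<kappa>"
    unfolding comp_order_def using j J nu by (intro member_le_sum) (simp_all add: less_imp_le)
  finally show ?thesis .
qed

lemma summable_ml_sum_density_terms:
  assumes J: "finite J" "J \<noteq> {}" and lam: "\<And>j. j \<in> J \<Longrightarrow> 0 < lam j"
    and nu: "\<And>j. j \<in> J \<Longrightarrow> 0 < nu j \<and> nu j \<le> 1"
  shows "summable (\<lambda>k. \<Sum>\<kappa>\<in>compositions J k. \<bar>comp_coeff lam J \<kappa>\<bar> * gamma_kernel (comp_order nu J \<kappa>) t)"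
proof (rule summable_gamma_kernel_sums[where p = "card J" and \<nu> = "Min (nu ` J)" and L = "max 1 (Max (lam ` J))"])
  have "lam j \<le> max 1 (Max (lam ` J))" if "j \<in> J" for j
  proof -
    have "lam j \<le> Max (lam ` J)" using J that by (intro Max_ge) auto
    then show ?thesis by (simp add: le_max_iff_disj)
  qed
  then show "\<bar>comp_coeff lam J \<kappa>\<bar> \<le> max 1 (Max (lam ` J)) ^ k" if "\<kappa> \<in> compositions J k" for \<kappa> k
    using that lam by (intro abs_comp_coeff_le) auto
  show "0 < Min (nu ` J)" using J nu by (subst Min_gr_iff) auto
  have nu_bounds: "Min (nu ` J) \<le> nu j \<and> nu j \<le> 1" if "j \<in> J" for j
    using J nu that by (auto intro: Min_le)
  show "Min (nu ` J) * k \<le> comp_order nu J \<kappa> \<and> comp_order nu J \<kappa> \<le> real k + 1 \<and> 0 < comp_order nu J \<kappa>"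
    if "\<kappa> \<in> compositions J k" for \<kappa> k
    using comp_order_bounds[where nu = nu, OF J(1) that nu_bounds] comp_order_pos[OF J that, of nu] nu
    by simp
qed (use card_compositions_le[OF J(1)] in auto)

definition zero_outside :: "nat set \<Rightarrow> (nat \<Rightarrow> nat) \<Rightarrow> nat \<Rightarrow> nat" where
  "zero_outside J \<mu> = (\<lambda>i. if i \<in> J then \<mu> i else 0)"

lemma comp_coeff_zero_outside [simp]: "comp_coeff lam J (zero_outside J \<mu>) = comp_coeff lam J \<mu>"
  unfolding comp_coeff_def by (intro prod.cong) (auto simp: zero_outside_def)

lemma comp_order_zero_outside [simp]: "comp_order nu J (zero_outside J \<mu>) = comp_order nu J \<mu>"
  unfolding comp_order_def by (intro sum.cong) (auto simp: zero_outside_def)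

lemma sum_compositions_Un:
  assumes J: "finite J" and J': "finite J'" and disj: "J \<inter> J' = {}"
  shows "(\<Sum>m\<le>n. \<Sum>\<kappa>\<in>compositions J m. \<Sum>\<kappa>'\<in>compositions J' (n - m). G \<kappa> \<kappa>') =
         (\<Sum>\<mu>\<in>compositions (J \<union> J') n. G (zero_outside J \<mu>) (zero_outside J' \<mu>))"
proof -
  define T where "T = Sigma {..n} (\<lambda>m. compositions J m \<times> compositions J' (n - m))"
  define merge where "merge z = (\<lambda>i. if i \<in> J then fst (snd z) i else snd (snd z) i)"
    for z :: "nat \<times> (nat \<Rightarrow> nat) \<times> (nat \<Rightarrow> nat)"
  have "(\<Sum>m\<le>n. \<Sum>\<kappa>\<in>compositions J m. \<Sum>\<kappa>'\<in>compositions J' (n - m). G \<kappa> \<kappa>') =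
        (\<Sum>z\<in>T. G (fst (snd z)) (snd (snd z)))"
    unfolding T_def using finite_compositions[OF J] finite_compositions[OF J']
    by (simp add: sum.Sigma sum.cartesian_product split_def)
  also have "\<dots> = (\<Sum>\<mu>\<in>compositions (J \<union> J') n. G (zero_outside J \<mu>) (zero_outside J' \<mu>))"
  proof (rule sum.reindex_bij_witness[where j = merge
                                        and i = "\<lambda>\<mu>. (\<Sum>j\<in>J. \<mu> j, zero_outside J \<mu>, zero_outside J' \<mu>)"])
    fix \<mu> assume \<mu>: "\<mu> \<in> compositions (J \<union> J') n"
    then have "(\<Sum>j\<in>J. \<mu> j) + (\<Sum>j\<in>J'. \<mu> j) = n"
      using J J' disj by (simp add: compositions_def sum.union_disjoint)
    then show "(\<Sum>j\<in>J. \<mu> j, zero_outside J \<mu>, zero_outside J' \<mu>) \<in> T"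
      using \<mu> unfolding T_def by (auto simp: compositions_def zero_outside_def)
    show "merge (\<Sum>j\<in>J. \<mu> j, zero_outside J \<mu>, zero_outside J' \<mu>) = \<mu>"
      using \<mu> by (auto simp: compositions_def zero_outside_def merge_def fun_eq_iff)
  next
    fix z assume "z \<in> T"
    then obtain m \<kappa> \<kappa>' where z: "z = (m, \<kappa>, \<kappa>')" and m: "m \<le> n"
      and \<kappa>: "\<kappa> \<in> compositions J m" and \<kappa>': "\<kappa>' \<in> compositions J' (n - m)"
      unfolding T_def by auto
    have "(\<Sum>j\<in>J'. merge z j) = (\<Sum>j\<in>J'. \<kappa>' j)" using disj by (intro sum.cong) (auto simp: merge_def z)
    then have "(\<Sum>j\<in>J \<union> J'. merge z j) = n"
      using J J' disj m \<kappa> \<kappa>' by (simp add: sum.union_disjoint compositions_def merge_def z)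
    then show "merge z \<in> compositions (J \<union> J') n"
      using \<kappa> \<kappa>' by (auto simp: compositions_def merge_def z)
    have "zero_outside J (merge z) = \<kappa>" "zero_outside J' (merge z) = \<kappa>'"
      using \<kappa> \<kappa>' disj by (auto simp: compositions_def zero_outside_def fun_eq_iff merge_def z)
    moreover have "(\<Sum>j\<in>J. merge z j) = m" using \<kappa> by (simp add: compositions_def merge_def z)
    ultimately show "(\<Sum>j\<in>J. merge z j, zero_outside J (merge z), zero_outside J' (merge z)) = z"
      and "G (zero_outside J (merge z)) (zero_outside J' (merge z)) = G (fst (snd z)) (snd (snd z))"
      by (simp_all add: z)
  qed
  finally show ?thesis .
qed

lemma ml_sum_density_nonpos: "t \<le> 0 \<Longrightarrow> ml_sum_density lam nu J t = 0"
  by (simp add: ml_sum_density_def)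

lemma borel_measurable_ml_sum_density [measurable]: "ml_sum_density lam nu J \<in> borel_measurable borel"
  unfolding ml_sum_density_def by measurable

lemma ml_sum_density_convolution:
  assumes J: "finite J" "J \<noteq> {}" and J': "finite J'" "J' \<noteq> {}" and disj: "J \<inter> J' = {}"
    and lam: "\<And>j. j \<in> J \<union> J' \<Longrightarrow> 0 < lam j"
    and nu: "\<And>j. j \<in> J \<union> J' \<Longrightarrow> 0 < nu j \<and> nu j \<le> 1"
  shows "integrable lborel (\<lambda>y. ml_sum_density lam nu J (x - y) * ml_sum_density lam nu J' y)"
    and "(\<integral>y. ml_sum_density lam nu J (x - y) * ml_sum_density lam nu J' y \<partial>lborel) =
         ml_sum_density lam nu (J \<union> J') x"
proof -
  have regroup: "(\<Sum>m\<le>n. \<Sum>\<kappa>\<in>compositions J m. \<Sum>\<kappa>'\<in>compositions J' (n - m).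
        H (comp_coeff lam J \<kappa> * comp_coeff lam J' \<kappa>') (comp_order nu J \<kappa> + comp_order nu J' \<kappa>'))
      = (\<Sum>\<mu>\<in>compositions (J \<union> J') n. H (comp_coeff lam (J \<union> J') \<mu>) (comp_order nu (J \<union> J') \<mu>))" for n H
    using J J' disj
    by (simp add: sum_compositions_Un) (simp add: comp_coeff_def comp_order_def prod.union_disjoint sum.union_disjoint)
  have JJ': "finite (J \<union> J')" "J \<union> J' \<noteq> {}" using J J' by auto
  have order_pos: "0 < comp_order nu J \<kappa>" if "\<kappa> \<in> compositions J k" for \<kappa> k
    using comp_order_pos[OF J that] nu by blast
  have order_pos': "0 < comp_order nu J' \<kappa>" if "\<kappa> \<in> compositions J' k" for \<kappa> k
    using comp_order_pos[OF J' that] nu by blast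
  have summable_J: "summable (\<lambda>k. \<Sum>\<kappa>\<in>compositions J k. \<bar>comp_coeff lam J \<kappa>\<bar> * gamma_kernel (comp_order nu J \<kappa>) t)"
   and summable_J': "summable (\<lambda>k. \<Sum>\<kappa>\<in>compositions J' k. \<bar>comp_coeff lam J' \<kappa>\<bar> * gamma_kernel (comp_order nu J' \<kappa>) t)"
   for t using summable_ml_sum_density_terms J J' lam nu by auto
  have "summable (\<lambda>n. \<Sum>m\<le>n. \<Sum>\<kappa>\<in>compositions J m. \<Sum>\<kappa>'\<in>compositions J' (n - m).
      \<bar>comp_coeff lam J \<kappa> * comp_coeff lam J' \<kappa>'\<bar> * gamma_kernel (comp_order nu J \<kappa> + comp_order nu J' \<kappa>') x)"
    using regroup[of "\<lambda>a b. \<bar>a\<bar> * gamma_kernel b x"] summable_ml_sum_density_terms[OF JJ', of lam nu x] lam nu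
    by simp
  note conv = gamma_kernel_series_convolution[OF order_pos order_pos' summable_J summable_J' this]
  show "integrable lborel (\<lambda>y. ml_sum_density lam nu J (x - y) * ml_sum_density lam nu J' y)"
    unfolding ml_sum_density_def by (rule conv(1))
  show "(\<integral>y. ml_sum_density lam nu J (x - y) * ml_sum_density lam nu J' y \<partial>lborel) =
        ml_sum_density lam nu (J \<union> J') x"
    unfolding ml_sum_density_def using conv(2) regroup[of "\<lambda>a b. a * gamma_kernel b x"] by simp
qed

section \<open>A single Mittag-Leffler variable\<close>

text \<open>
  The k-th term of the gamma kernel expansion of the Mittag-Leffler density (s = 0) and of its
  distribution function (s = 1).
\<close>
definition ml_term :: "real \<Rightarrow> real \<Rightarrow> real \<Rightarrow> nat \<Rightarrow> real \<Rightarrow> real" where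
  "ml_term l v s k t = (if k = 0 then 0 else (-1) ^ (k + 1) * l ^ k * gamma_kernel (real k * v + s) t)"

lemma ml_sum_density_singleton: "ml_sum_density lam nu {j} t = (\<Sum>k. ml_term (lam j) (nu j) 0 k t)"
proof -
  have "compositions {j} k = (if k = 0 then {} else {(\<lambda>i. if i = j then k else 0)})" for k
    by (auto simp: compositions_def fun_eq_iff)
  then have "(\<Sum>\<kappa>\<in>compositions {j} k. comp_coeff lam {j} \<kappa> * gamma_kernel (comp_order nu {j} \<kappa>) t) =
      ml_term (lam j) (nu j) 0 k t" for k
    by (cases "k = 0") (simp_all add: ml_term_def comp_coeff_def comp_order_def)
  then show ?thesis
    by (simp add: ml_sum_density_def)
qed

lemma summable_abs_ml_term:
  assumes l: "0 < l" and v: "0 < v" "v \<le> 1" and s: "0 \<le> s" "s \<le> 1"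
  shows "summable (\<lambda>k. \<bar>ml_term l v s k t\<bar>)"
proof -
  have "summable (\<lambda>n. \<Sum>i\<in>(if n = 0 then {} else {n}). \<bar>(-1) ^ (i + 1) * l ^ i\<bar> * gamma_kernel (real i * v + s) t)"
  proof (rule summable_gamma_kernel_sums[where p = 1 and L = "max 1 l", OF _ v(1)])
    show "\<bar>(-1) ^ (i + 1) * l ^ i\<bar> \<le> max 1 l ^ n" if "i \<in> (if n = 0 then {} else {n})" for i n
      using that l power_mono[of l "max 1 l" n] by (auto simp: abs_mult power_abs split: if_splits)
    show "v * n \<le> real i * v + s \<and> real i * v + s \<le> real n + 1 \<and> 0 < real i * v + s"
      if "i \<in> (if n = 0 then {} else {n})" for i n
      using that s v by (auto split: if_splits intro!: add_pos_nonneg add_mono mult_left_le)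
  qed simp_all
  moreover have "0 \<le> gamma_kernel (real n * v + s) t" if "n \<noteq> 0" for n
    using that v s by (intro gamma_kernel_nonneg add_pos_nonneg) auto
  ultimately show ?thesis
    by (simp add: ml_term_def abs_mult if_distrib cong: if_cong)
qed

lemma summable_ml_term:
  assumes "0 < l" "0 < v" "v \<le> 1" "0 \<le> s" "s \<le> 1"
  shows "summable (\<lambda>k. ml_term l v s k t)"
  using summable_rabs_cancel[OF summable_abs_ml_term[OF assms]] .

text \<open>Integration up to x is convolution with the Heaviside function gamma_kernel 1.\<close>
lemma gamma_kernel_integral_atMost:
  assumes a: "0 < a"
  shows "integrable lborel (\<lambda>s. gamma_kernel a s * indicator {..x} s)"
    and "(\<integral>s. gamma_kernel a s * indicator {..x} s \<partial>lborel) = gamma_kernel (a + 1) x"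
proof -
  define f where "f s = gamma_kernel a s * gamma_kernel 1 (x - s)" for s
  have f_reflect: "(\<lambda>y. f (x + (-1) * y)) = (\<lambda>y. gamma_kernel a (x - y) * gamma_kernel 1 y)"
    by (simp add: f_def fun_eq_iff)
  note conv = gamma_kernel_convolution[OF a zero_less_one, of x]
  have f_integrable: "integrable lborel f"
    using lborel_integrable_real_affine_iff[of "-1" f x] conv(1) unfolding f_reflect by simp
  have f_integral: "(\<integral>s. f s \<partial>lborel) = gamma_kernel (a + 1) x"
    using lborel_integral_real_affine[of "-1" f x] conv(2) unfolding f_reflect by simp
  have ae: "AE s in lborel. f s = gamma_kernel a s * indicator {..x} s"
    using AE_lborel_singleton[of x]
    by eventually_elim (auto simp: f_def gamma_kernel_def indicator_def)
  show "integrable lborel (\<lambda>s. gamma_kernel a s * indicator {..x} s)"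
    and "(\<integral>s. gamma_kernel a s * indicator {..x} s \<partial>lborel) = gamma_kernel (a + 1) x"
    using integrable_cong_AE[OF _ _ ae] integral_cong_AE[OF _ _ ae] f_integrable f_integral
    unfolding f_def by simp_all
qed

lemma ml_term_integral_atMost:
  assumes "0 < v"
  shows "integrable lborel (\<lambda>s. ml_term l v 0 k s * indicator {..x} s)"
    and "(\<integral>s. ml_term l v 0 k s * indicator {..x} s \<partial>lborel) = ml_term l v 1 k x"
proof -
  have "0 < real k * v" if "k \<noteq> 0" using that assms by simp
  note G = gamma_kernel_integral_atMost[OF this, of x]
  show "integrable lborel (\<lambda>s. ml_term l v 0 k s * indicator {..x} s)"
    using G(1) by (cases "k = 0") (simp_all add: ml_term_def mult.assoc)
  show "(\<integral>s. ml_term l v 0 k s * indicator {..x} s \<partial>lborel) = ml_term l v 1 k x"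
    using G(2) by (cases "k = 0") (simp_all add: ml_term_def mult.assoc)
qed

lemma abs_ml_term:
  assumes "0 < l" "0 < v" "0 \<le> s"
  shows "\<bar>ml_term l v s k t\<bar> = (-1) ^ (k + 1) * ml_term l v s k t"
proof (cases "k = 0")
  case False
  then have "0 \<le> gamma_kernel (real k * v + s) t" using assms by (intro gamma_kernel_nonneg add_pos_nonneg) auto
  moreover have "(-1::real) ^ (k + 1) * (-1) ^ (k + 1) = 1" by (simp flip: power_add)
  ultimately show ?thesis
    using assms False by (simp add: ml_term_def abs_mult power_abs mult.assoc [symmetric])
qed (simp add: ml_term_def)

lemma ml_sum_density_singleton_integral_atMost:
  assumes l: "0 < lam j" and v: "0 < nu j" "nu j \<le> 1"
  shows "integrable lborel (\<lambda>s. ml_sum_density lam nu {j} s * indicator {..x} s)"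
    and "(\<integral>s. ml_sum_density lam nu {j} s * indicator {..x} s \<partial>lborel) = (\<Sum>k. ml_term (lam j) (nu j) 1 k x)"
proof -
  define f where "f k s = ml_term (lam j) (nu j) 0 k s * indicator {..x} s" for k s
  note f_int = ml_term_integral_atMost[OF v(1), of "lam j" _ x, folded f_def]
  have "summable (\<lambda>k. ml_term (lam j) (nu j) 0 k s)" for s
    by (rule summable_ml_term) (use l v in auto)
  then have density_eq: "ml_sum_density lam nu {j} s * indicator {..x} s = (\<Sum>k. f k s)" for s
    by (simp add: ml_sum_density_singleton f_def suminf_mult2)
  have norm_f: "norm (f k s) = (-1) ^ (k + 1) * f k s" for k s
    using abs_ml_term[OF l v(1), of 0 k s] by (simp add: f_def abs_mult)
  have "summable (\<lambda>k. norm (f k s))" for s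
  proof (rule summable_comparison_test'[OF summable_abs_ml_term[of "lam j" "nu j" 0 s]])
    show "norm (norm (f k s)) \<le> \<bar>ml_term (lam j) (nu j) 0 k s\<bar>" for k
      by (simp add: f_def abs_mult indicator_def)
  qed (use l v in auto)
  then have "AE s in lborel. summable (\<lambda>k. norm (f k s))" by simp
  moreover have "summable (\<lambda>k. \<integral>s. norm (f k s) \<partial>lborel)"
  proof -
    have "(\<integral>s. norm (f k s) \<partial>lborel) = \<bar>ml_term (lam j) (nu j) 1 k x\<bar>" for k
      unfolding norm_f using f_int abs_ml_term[OF l v(1), of 1 k x] by simp
    then show ?thesis
      using summable_abs_ml_term[of "lam j" "nu j" 1] l v by simp
  qed
  ultimately show "integrable lborel (\<lambda>s. ml_sum_density lam nu {j} s * indicator {..x} s)"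
    and "(\<integral>s. ml_sum_density lam nu {j} s * indicator {..x} s \<partial>lborel) = (\<Sum>k. ml_term (lam j) (nu j) 1 k x)"
    unfolding density_eq using integrable_suminf[OF f_int(1)] integral_suminf[OF f_int(1)] f_int(2)
    by simp_all
qed

lemma one_minus_mittag_leffler_eq:
  assumes l: "0 < l" and v: "0 < v" "v \<le> 1" and t: "0 \<le> t"
  shows "1 - mittag_leffler v (- l * t powr v) = (\<Sum>k. ml_term l v 1 k t)"
proof -
  define a where "a k = (- l * t powr v) ^ k / Gamma (real k * v + 1)" for k
  have a_Suc: "a (Suc k) = - ml_term l v 1 (Suc k) t" for k
  proof (cases "t = 0")
    case False
    then have "(t powr v) ^ Suc k = (t powr v) powr real (Suc k)"
      using t by (subst powr_realpow) auto
    also have "\<dots> = t powr (real (Suc k) * v)" by (simp add: powr_powr mult.commute)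
    finally have "(t powr v) ^ Suc k = t powr (real (Suc k) * v)" .
    moreover have "(- l * t powr v) ^ Suc k = (-1) ^ Suc k * l ^ Suc k * (t powr v) ^ Suc k"
      by (simp only: power_mult_distrib [symmetric]) simp
    ultimately show ?thesis
      using False t by (simp add: a_def ml_term_def gamma_kernel_def)
  qed (use v in \<open>simp add: a_def ml_term_def\<close>)
  have summable_terms: "summable (\<lambda>k. ml_term l v 1 k t)"
    by (rule summable_ml_term) (use l v in auto)
  then have "(\<lambda>k. ml_term l v 1 (Suc k) t) sums (\<Sum>k. ml_term l v 1 k t)"
    by (subst sums_Suc_iff) (simp add: ml_term_def summable_sums)
  then have "(\<lambda>k. a (Suc k)) sums - (\<Sum>k. ml_term l v 1 k t)"
    unfolding a_Suc by (rule sums_minus)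
  then have "a sums (- (\<Sum>k. ml_term l v 1 k t) + a 0)"
    by (simp add: sums_Suc_iff)
  moreover have "mittag_leffler v (- l * t powr v) = suminf a"
    unfolding mittag_leffler_def a_def ..
  ultimately show ?thesis by (simp add: sums_iff a_def)
qed

lemma abs_ml_term_le:
  assumes l: "0 < l" and v: "0 < v" and a: "0 < a" and t: "a \<le> t" "t \<le> b"
  shows "\<bar>ml_term l v 0 k t\<bar> \<le> (b / a) * \<bar>ml_term l v 0 k b\<bar>"
proof (cases "k = 0")
  case False
  have "t powr (real k * v - 1) = t powr (real k * v) / t" using a t by (simp add: powr_diff)
  also have "\<dots> \<le> b powr (real k * v) / a"
    using a t v by (intro frac_le powr_mono2) auto
  also have "\<dots> = (b / a) * b powr (real k * v - 1)" using a t by (simp add: powr_diff)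
  moreover have "0 < Gamma (real k * v)" using False v by (intro Gamma_real_pos) simp
  ultimately have "t powr (real k * v - 1) / Gamma (real k * v) \<le> (b / a) * b powr (real k * v - 1) / Gamma (real k * v)"
    by (intro divide_right_mono) auto
  then have "gamma_kernel (real k * v) t \<le> (b / a) * gamma_kernel (real k * v) b"
    using a t by (simp add: gamma_kernel_def)
  then have "l ^ k * gamma_kernel (real k * v) t \<le> (b / a) * (l ^ k * gamma_kernel (real k * v) b)"
    using l by (metis mult_left_mono mult.left_commute zero_le_power less_imp_le)
  moreover have "\<bar>ml_term l v 0 k u\<bar> = l ^ k * gamma_kernel (real k * v) u" for u
    using False l v by (simp add: ml_term_def abs_mult power_abs gamma_kernel_nonneg)
  ultimately show ?thesis by simp
qed (simp add: ml_term_def)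

lemma continuous_on_ml_sum_density_singleton:
  assumes l: "0 < lam j" and v: "0 < nu j" "nu j \<le> 1" and a: "0 < a"
  shows "continuous_on {a..b} (ml_sum_density lam nu {j})"
proof -
  have majorant: "summable (\<lambda>k. (b / a) * \<bar>ml_term (lam j) (nu j) 0 k b\<bar>)"
    by (intro summable_mult summable_abs_ml_term) (use l v in auto)
  have "uniform_limit {a..b} (\<lambda>n t. \<Sum>k<n. ml_term (lam j) (nu j) 0 k t)
      (\<lambda>t. \<Sum>k. ml_term (lam j) (nu j) 0 k t) sequentially"
    by (rule Weierstrass_m_test[OF _ majorant]) (use abs_ml_term_le[OF l v(1) a] in auto)
  moreover have "continuous_on {a..b} (\<lambda>t. ml_term (lam j) (nu j) 0 k t)" for k
    unfolding ml_term_def using continuous_on_gamma_kernel[OF a]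
    by (cases "k = 0") (auto intro!: continuous_intros)
  ultimately have "continuous_on {a..b} (\<lambda>t. \<Sum>k. ml_term (lam j) (nu j) 0 k t)"
    by (intro uniform_limit_theorem) (auto intro!: always_eventually continuous_on_sum)
  then show ?thesis
    by (simp add: ml_sum_density_singleton [abs_def])
qed

lemma isCont_ml_sum_density_singleton:
  assumes "0 < lam j" "0 < nu j" "nu j \<le> 1" and t: "0 < t"
  shows "isCont (ml_sum_density lam nu {j}) t"
proof (rule continuous_on_interior)
  show "continuous_on {t/2..2*t} (ml_sum_density lam nu {j})"
    using assms by (intro continuous_on_ml_sum_density_singleton) auto
qed (use t in simp)

lemma nonneg_if_interval_integrals_nonneg:
  fixes D :: "real \<Rightarrow> real"
  assumes cont: "isCont D t"
    and int: "\<And>h. 0 < h \<Longrightarrow> integrable lborel (\<lambda>s. D s * indicator {t<..t+h} s)"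
    and nonneg: "\<And>h. 0 < h \<Longrightarrow> 0 \<le> (\<integral>s. D s * indicator {t<..t+h} s \<partial>lborel)"
  shows "0 \<le> D t"
proof (rule ccontr)
  assume "\<not> 0 \<le> D t"
  then have neg: "D t < 0" by simp
  then obtain \<delta> where \<delta>: "0 < \<delta>" and near: "\<And>s. dist s t < \<delta> \<Longrightarrow> dist (D s) (D t) < - D t / 2"
    using cont unfolding continuous_at_eps_delta by (metis neg_0_less_iff_less half_gt_zero)
  define h where "h = \<delta> / 2"
  have h: "0 < h" "h < \<delta>" using \<delta> by (auto simp: h_def)
  have "D s * indicator {t<..t+h} s \<le> (D t / 2) * indicator {t<..t+h} s" for s
  proof (cases "s \<in> {t<..t+h}")
    case True
    then have "dist (D s) (D t) < - D t / 2" using h by (intro near) (auto simp: dist_real_def)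
    then show ?thesis using True by (auto simp: dist_real_def)
  qed simp
  then have "(\<integral>s. D s * indicator {t<..t+h} s \<partial>lborel) \<le> (\<integral>s. (D t / 2) * indicator {t<..t+h} s \<partial>lborel)"
    using h by (intro integral_mono int integrable_mult_right integrable_real_indicator) auto
  also have "\<dots> = D t / 2 * h" using h by (simp add: measure_def)
  also have "\<dots> < 0" using neg h by (simp add: mult_neg_pos)
  finally show False using nonneg[OF h(1)] by simp
qed

lemma (in prob_space) distributed_if_cdf_eq_integral:
  fixes Y :: "'a \<Rightarrow> real" and D :: "real \<Rightarrow> real"
  assumes Y: "Y \<in> borel_measurable M" and D: "D \<in> borel_measurable borel" "\<And>t. 0 \<le> D t"
    and int: "\<And>x. integrable lborel (\<lambda>s. D s * indicator {..x} s)"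
    and cdf: "\<And>x. (\<integral>s. D s * indicator {..x} s \<partial>lborel) = measure M {\<omega> \<in> space M. Y \<omega> \<le> x}"
  shows "distributed M lborel Y (\<lambda>t. ennreal (D t))"
proof -
  have D_measurable: "(\<lambda>t. ennreal (D t)) \<in> borel_measurable lborel" using D by measurable
  have "emeasure (density lborel (\<lambda>t. ennreal (D t))) {..x} = ennreal (\<integral>s. D s * indicator {..x} s \<partial>lborel)" for x
  proof -
    have "emeasure (density lborel (\<lambda>t. ennreal (D t))) {..x} = (\<integral>\<^sup>+s. ennreal (D s) * indicator {..x} s \<partial>lborel)"
      using D_measurable by (simp add: emeasure_density)
    also have "\<dots> = (\<integral>\<^sup>+s. ennreal (D s * indicator {..x} s) \<partial>lborel)"
      by (intro nn_integral_cong) (simp add: indicator_def)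
    also have "\<dots> = ennreal (\<integral>s. D s * indicator {..x} s \<partial>lborel)"
      by (rule nn_integral_eq_integral[OF int]) (simp add: D indicator_def)
    finally show ?thesis .
  qed
  moreover have distr_atMost: "emeasure (distr M lborel Y) {..x} = ennreal (measure M {\<omega> \<in> space M. Y \<omega> \<le> x})" for x
  proof -
    have "emeasure (distr M lborel Y) {..x} = emeasure M (Y -` {..x} \<inter> space M)"
      using Y by (intro emeasure_distr) auto
    also have "Y -` {..x} \<inter> space M = {\<omega> \<in> space M. Y \<omega> \<le> x}" by auto
    finally show ?thesis by (simp add: emeasure_eq_measure)
  qed
  ultimately have emeasure_eq: "emeasure (distr M lborel Y) {..x} = emeasure (density lborel (\<lambda>t. ennreal (D t))) {..x}" for x
    by (simp add: cdf)
  have sets_atMost: "sets (borel :: real measure) = sigma_sets UNIV (range atMost)"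
    by (subst borel_eq_atMost) (simp add: sets_measure_of)
  have "distr M lborel Y = density lborel (\<lambda>t. ennreal (D t))"
  proof (rule measure_eqI_generator_eq[where \<Omega> = UNIV and E = "range atMost" and A = "\<lambda>i. {..real i}"])
    show "Int_stable (range atMost :: real set set)" by (auto simp: Int_stable_def)
    show "\<And>X. X \<in> range atMost \<Longrightarrow> emeasure (distr M lborel Y) X = emeasure (density lborel (\<lambda>t. ennreal (D t))) X"
      using emeasure_eq by auto
    show "(\<Union>i. {..real i}) = (UNIV :: real set)" by (auto simp: real_arch_simple)
    show "\<And>i. emeasure (distr M lborel Y) {..real i} \<noteq> \<infinity>"
      using distr_atMost by simp
  qed (use sets_atMost in auto)
  then show ?thesis
    using D_measurable Y unfolding distributed_def by simp
qed

lemma distributed_cong_density_except_point: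
  fixes f g :: "real \<Rightarrow> real"
  assumes "distributed M lborel X (\<lambda>t. ennreal (f t))" and "f \<in> borel_measurable borel"
    and "\<And>t. t \<noteq> c \<Longrightarrow> g t = f t"
  shows "distributed M lborel X (\<lambda>t. ennreal (g t))"
proof -
  note [measurable] = assms(2)
  have g_eq: "g = (\<lambda>t. if t = c then g c else f t)"
    using assms(3) by auto
  have "(\<lambda>t. ennreal (g t)) \<in> borel_measurable lborel"
    by (subst g_eq) measurable
  moreover have "AE t in lborel. ennreal (f t) = ennreal (g t)"
    using AE_lborel_singleton[of c] by eventually_elim (simp add: assms(3))
  ultimately show ?thesis
    using assms(1,2) by (subst (asm) distributed_cong_density) auto
qed

lemma (in prob_space) ml_distributed:
  assumes l: "0 < lam j" and v: "0 < nu j" "nu j \<le> 1" and Y[measurable]: "Y \<in> borel_measurable M"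
    and cdf: "\<And>t. 0 \<le> t \<Longrightarrow> measure M {x \<in> space M. Y x \<le> t} = 1 - mittag_leffler (nu j) (- lam j * t powr nu j)"
  shows "(\<forall>t. 0 \<le> ml_sum_density lam nu {j} t) \<and> distributed M lborel Y (\<lambda>t. ennreal (ml_sum_density lam nu {j} t))"
proof -
  define D where "D = ml_sum_density lam nu {j}"
  define F where "F t = (\<Sum>k. ml_term (lam j) (nu j) 1 k t)" for t
  have F_nonpos: "F t = 0" if "t \<le> 0" for t
  proof -
    have "ml_term (lam j) (nu j) 1 k t = 0" for k using that by (simp add: ml_term_def)
    then show ?thesis by (simp add: F_def)
  qed
  have events: "{x \<in> space M. Y x \<le> t} \<in> events" for t by measurable
  have F_cdf: "measure M {x \<in> space M. Y x \<le> t} = F t" for t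
  proof (cases "0 \<le> t")
    case True
    then show ?thesis using cdf one_minus_mittag_leffler_eq[OF l v] by (simp add: F_def)
  next
    case False
    have "measure M {x \<in> space M. Y x \<le> t} \<le> measure M {x \<in> space M. Y x \<le> 0}"
      using False by (intro finite_measure_mono events) auto
    also have "\<dots> = 0" using cdf[of 0] one_minus_mittag_leffler_eq[OF l v, of 0] F_nonpos[of 0] by (simp add: F_def)
    finally show ?thesis using False F_nonpos[of t] by (simp add: measure_nonneg antisym)
  qed
  note D_atMost = ml_sum_density_singleton_integral_atMost[where lam = lam and nu = nu and j = j, OF l v,
      folded D_def F_def]
  have D_interval: "integrable lborel (\<lambda>s. D s * indicator {a<..b} s) \<and>
      (\<integral>s. D s * indicator {a<..b} s \<partial>lborel) = F b - F a" if "a \<le> b" for a b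
  proof -
    have "(\<lambda>s. D s * indicator {a<..b} s) = (\<lambda>s. D s * indicator {..b} s - D s * indicator {..a} s)"
      using that by (auto simp: fun_eq_iff indicator_def)
    then show ?thesis using D_atMost by simp
  qed
  have D_nonneg: "0 \<le> D t" for t
  proof (cases "0 < t")
    case True
    show ?thesis
    proof (rule nonneg_if_interval_integrals_nonneg[where D = D])
      show "isCont D t" unfolding D_def using l v True by (rule isCont_ml_sum_density_singleton)
      fix h :: real assume "0 < h"
      moreover have "F t \<le> F (t + h)"
        unfolding F_cdf[symmetric] using \<open>0 < h\<close> by (intro finite_measure_mono events) auto
      ultimately show "integrable lborel (\<lambda>s. D s * indicator {t<..t+h} s)"
        and "0 \<le> (\<integral>s. D s * indicator {t<..t+h} s \<partial>lborel)"
        using D_interval[of t "t + h"] by simp_all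
    qed
  qed (simp add: D_def ml_sum_density_nonpos)
  have "distributed M lborel Y (\<lambda>t. ennreal (D t))"
    using D_nonneg D_atMost F_cdf unfolding D_def by (intro distributed_if_cdf_eq_integral) auto
  with D_nonneg show ?thesis unfolding D_def by simp
qed

section \<open>Sums of independent Mittag-Leffler variables\<close>

lemma (in prob_space) ml_sum_distributed:
  fixes Y :: "nat \<Rightarrow> 'a \<Rightarrow> real"
  assumes "finite I" "I \<noteq> {}" and "indep_vars (\<lambda>_. borel) Y I"
    and "\<And>j. j \<in> I \<Longrightarrow> 0 < lam j" and "\<And>j. j \<in> I \<Longrightarrow> 0 < nu j \<and> nu j \<le> 1"
    and "\<And>j. j \<in> I \<Longrightarrow> (\<forall>t. 0 \<le> ml_sum_density lam nu {j} t) \<and>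
           distributed M lborel (Y j) (\<lambda>t. ennreal (ml_sum_density lam nu {j} t))"
  shows "(\<forall>t. 0 \<le> ml_sum_density lam nu I t) \<and>
         distributed M lborel (\<lambda>x. \<Sum>j\<in>I. Y j x) (\<lambda>t. ennreal (ml_sum_density lam nu I t))"
  using assms
proof (induction I rule: finite_ne_induct)
  case (singleton i)
  then show ?case by simp
next
  case (insert i I)
  have IH: "(\<forall>t. 0 \<le> ml_sum_density lam nu I t) \<and>
      distributed M lborel (\<lambda>x. \<Sum>j\<in>I. Y j x) (\<lambda>t. ennreal (ml_sum_density lam nu I t))"
    using insert.prems by (intro insert.IH indep_vars_subset[OF insert.prems(1)]) auto
  have Y_i: "(\<forall>t. 0 \<le> ml_sum_density lam nu {i} t) \<and>
      distributed M lborel (Y i) (\<lambda>t. ennreal (ml_sum_density lam nu {i} t))"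
    using insert.prems(4) by simp
  have "indep_var borel (Y i) borel (\<lambda>\<omega>. \<Sum>j\<in>I. Y j \<omega>)"
    using insert.hyps insert.prems(1) by (intro indep_vars_sum) auto
  then have sum_distributed: "distributed M lborel (\<lambda>x. Y i x + (\<Sum>j\<in>I. Y j x))
      (\<lambda>x. \<integral>\<^sup>+y. ennreal (ml_sum_density lam nu {i} (x - y)) * ennreal (ml_sum_density lam nu I y) \<partial>lborel)"
    using Y_i IH by (intro distributed_convolution) auto
  note conv = ml_sum_density_convolution[of "{i}" I, simplified]
  have conv': "integrable lborel (\<lambda>y. ml_sum_density lam nu {i} (x - y) * ml_sum_density lam nu I y)"
    "(\<integral>y. ml_sum_density lam nu {i} (x - y) * ml_sum_density lam nu I y \<partial>lborel) = ml_sum_density lam nu (insert i I) x"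
    for x using insert conv by auto
  have "(\<integral>\<^sup>+y. ennreal (ml_sum_density lam nu {i} (x - y)) * ennreal (ml_sum_density lam nu I y) \<partial>lborel)
      = ennreal (ml_sum_density lam nu (insert i I) x)" for x
    using Y_i IH conv'[of x] by (simp add: ennreal_mult[symmetric] nn_integral_eq_integral)
  moreover have "0 \<le> ml_sum_density lam nu (insert i I) x" for x
    unfolding conv'(2)[symmetric] using Y_i IH by (intro integral_nonneg_AE AE_I2) auto
  ultimately show ?case
    using sum_distributed insert.hyps by (simp add: sum.insert)
qed

section \<open>The explicit series\<close>

lemma bij_betw_compositions_Lambda_set:
  assumes n: "1 \<le> n"
  shows "bij_betw (\<lambda>\<kappa>. \<kappa>(1 := \<kappa> 1 + 1)) (Lambda_set n (m + (n - 1))) (compositions {1..n} (m + n))"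
proof (rule bij_betw_byWitness[where f' = "\<lambda>\<kappa>. \<kappa>(1 := \<kappa> 1 - 1)"])
  have split: "(\<Sum>j=1..n. \<kappa> j) = \<kappa> 1 + (\<Sum>j=2..n. \<kappa> j)" for \<kappa> :: "nat \<Rightarrow> nat"
    using n by (simp add: sum.atLeast_Suc_atMost numeral_2_eq_2)
  have tail: "(\<Sum>j=2..n. (\<kappa>(1 := a)) j) = (\<Sum>j=2..n. \<kappa> j)" for \<kappa> :: "nat \<Rightarrow> nat" and a
    by (intro sum.cong) auto
  show "(\<lambda>\<kappa>. \<kappa>(1 := \<kappa> 1 + 1)) ` Lambda_set n (m + (n - 1)) \<subseteq> compositions {1..n} (m + n)"
  proof clarify
    fix \<kappa> assume \<kappa>: "\<kappa> \<in> Lambda_set n (m + (n - 1))"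
    have "(\<Sum>j=1..n. (\<kappa>(1 := \<kappa> 1 + 1)) j) = (\<kappa> 1 + 1) + (\<Sum>j=2..n. \<kappa> j)"
      by (simp only: split tail fun_upd_same)
    also have "\<dots> = m + n" using \<kappa> n split[of \<kappa>] by (simp add: Lambda_set_def)
    finally show "\<kappa>(1 := \<kappa> 1 + 1) \<in> compositions {1..n} (m + n)"
      using \<kappa> n by (auto simp: Lambda_set_def compositions_def)
  qed
  show "(\<lambda>\<kappa>. \<kappa>(1 := \<kappa> 1 - 1)) ` compositions {1..n} (m + n) \<subseteq> Lambda_set n (m + (n - 1))"
  proof clarify
    fix \<kappa> assume \<kappa>: "\<kappa> \<in> compositions {1..n} (m + n)"
    then have "1 \<le> \<kappa> 1" using n by (auto simp: compositions_def)
    have "(\<Sum>j=1..n. (\<kappa>(1 := \<kappa> 1 - 1)) j) = (\<kappa> 1 - 1) + (\<Sum>j=2..n. \<kappa> j)"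
      by (simp only: split tail fun_upd_same)
    also have "\<dots> = m + (n - 1)" using \<kappa> n split[of \<kappa>] \<open>1 \<le> \<kappa> 1\<close> by (simp add: compositions_def)
    finally show "\<kappa>(1 := \<kappa> 1 - 1) \<in> Lambda_set n (m + (n - 1))"
      using \<kappa> by (auto simp: Lambda_set_def compositions_def)
  qed
  show "\<forall>\<kappa>\<in>Lambda_set n (m + (n - 1)). (\<kappa>(1 := \<kappa> 1 + 1))(1 := (\<kappa>(1 := \<kappa> 1 + 1)) 1 - 1) = \<kappa>"
    by auto
  show "\<forall>\<kappa>\<in>compositions {1..n} (m + n). (\<kappa>(1 := \<kappa> 1 - 1))(1 := (\<kappa>(1 := \<kappa> 1 - 1)) 1 + 1) = \<kappa>"
  proof
    fix \<kappa> assume "\<kappa> \<in> compositions {1..n} (m + n)"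
    then have "1 \<le> \<kappa> 1" using n by (auto simp: compositions_def)
    then show "(\<kappa>(1 := \<kappa> 1 - 1))(1 := (\<kappa>(1 := \<kappa> 1 - 1)) 1 + 1) = \<kappa>" by (auto simp: fun_eq_iff)
  qed
qed

lemma comp_order_shift_first:
  assumes "1 \<le> n" "nu 1 = 1"
  shows "comp_order nu {1..n} (\<kappa>(1 := \<kappa> 1 + 1)) = 1 + (real (\<kappa> 1) + (\<Sum>j=2..n. real (\<kappa> j) * nu j))"
proof -
  have "comp_order nu {1..n} (\<kappa>(1 := \<kappa> 1 + 1)) =
      real (\<kappa> 1 + 1) * nu 1 + (\<Sum>j=2..n. real ((\<kappa>(1 := \<kappa> 1 + 1)) j) * nu j)"
    using assms by (simp add: comp_order_def sum.atLeast_Suc_atMost numeral_2_eq_2)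
  also have "(\<Sum>j=2..n. real ((\<kappa>(1 := \<kappa> 1 + 1)) j) * nu j) = (\<Sum>j=2..n. real (\<kappa> j) * nu j)"
    by (intro sum.cong) auto
  also have "real (\<kappa> 1 + 1) * nu 1 = 1 + real (\<kappa> 1)" using assms by simp
  finally show ?thesis by linarith
qed

lemma comp_coeff_shift_first:
  assumes n: "1 \<le> n" and lam_n: "lam n = 1" and \<kappa>: "(\<Sum>j=1..n. \<kappa> j) = m + (n - 1)"
  shows "comp_coeff lam {1..n} (\<kappa>(1 := \<kappa> 1 + 1)) = (-1) ^ m * (lam 1 * (\<Prod>j=1..n-1. lam j ^ \<kappa> j))"
proof -
  let ?\<kappa> = "\<kappa>(1 := \<kappa> 1 + 1)"
  have "(\<Sum>j=1..n. ?\<kappa> j) = 1 + (\<Sum>j=1..n. \<kappa> j)"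
    using n by (simp add: sum.atLeast_Suc_atMost)
  then have "(\<Sum>j=1..n. ?\<kappa> j + 1) = m + 2 * n"
    using n \<kappa> unfolding sum.distrib by simp
  then have "(\<Prod>j=1..n. (-1::real) ^ (?\<kappa> j + 1)) = (-1) ^ (m + 2 * n)"
    by (simp only: power_sum [symmetric])
  also have "\<dots> = (-1) ^ m" by (simp add: power_add power_mult)
  finally have sign: "(\<Prod>j=1..n. (-1::real) ^ (?\<kappa> j + 1)) = (-1) ^ m" .
  have "(\<Prod>j=1..n. lam j ^ ?\<kappa> j) = lam 1 * (\<Prod>j=1..n. lam j ^ \<kappa> j)"
    using n by (simp add: prod.atLeast_Suc_atMost)
  also have "(\<Prod>j=1..n. lam j ^ \<kappa> j) = (\<Prod>j=1..n-1. lam j ^ \<kappa> j)"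
    using n lam_n by (cases n) simp_all
  finally show ?thesis unfolding comp_coeff_def prod.distrib sign by simp
qed

lemma sum_compositions_eq_fW_term:
  assumes n: "1 \<le> n" and t: "0 < t" and nu_1: "nu 1 = 1" and lam_n: "lam n = 1"
  shows "(\<Sum>\<kappa>\<in>compositions {1..n} (m + n). comp_coeff lam {1..n} \<kappa> * gamma_kernel (comp_order nu {1..n} \<kappa>) t) =
         (-1) ^ (n - 1) * lam 1 * fW_term n lam nu t (m + (n - 1))"
proof -
  have sign: "(-1::real) ^ m = (-1) ^ (n - 1) * (-1) ^ (m + (n - 1))"
    by (simp add: power_add mult.left_commute flip: power_add [of _ "n - 1" "n - 1"] mult_2)
  have "comp_coeff lam {1..n} (\<kappa>(1 := \<kappa> 1 + 1)) * gamma_kernel (comp_order nu {1..n} (\<kappa>(1 := \<kappa> 1 + 1))) t =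
      (-1) ^ (n - 1) * lam 1 * ((-1) ^ (m + (n - 1)) *
        (pow0 t (real (\<kappa> 1) + (\<Sum>j=2..n. real (\<kappa> j) * nu j)) * (\<Prod>j=1..n-1. lam j ^ \<kappa> j)
         / Gamma (1 + real (\<kappa> 1) + (\<Sum>j=2..n. real (\<kappa> j) * nu j))))"
    if "\<kappa> \<in> Lambda_set n (m + (n - 1))" for \<kappa>
    using that t comp_coeff_shift_first[where lam = lam, OF n lam_n, of \<kappa> m]
      comp_order_shift_first[where nu = nu, OF n nu_1, of \<kappa>]
    by (simp add: Lambda_set_def gamma_kernel_def pow0_def sign add.assoc)
  then show ?thesis
    unfolding fW_term_def sum_distrib_left
    by (subst sum.reindex_bij_betw[OF bij_betw_compositions_Lambda_set[OF n], symmetric]) simp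
qed

lemma ml_sum_density_eq_fW_series:
  assumes n: "1 \<le> n" and t: "0 < t" and nu_1: "nu 1 = 1" and lam_n: "lam n = 1"
    and lam: "\<And>j. j \<in> {1..n} \<Longrightarrow> 0 < lam j" and nu: "\<And>j. j \<in> {1..n} \<Longrightarrow> 0 < nu j \<and> nu j \<le> 1"
  shows "summable (\<lambda>m. fW_term n lam nu t (m + (n - 1)))"
    and "ml_sum_density lam nu {1..n} t = (-1) ^ (n - 1) * lam 1 * (\<Sum>m. fW_term n lam nu t (m + (n - 1)))"
proof -
  define A where "A k = (\<Sum>\<kappa>\<in>compositions {1..n} k. comp_coeff lam {1..n} \<kappa> * gamma_kernel (comp_order nu {1..n} \<kappa>) t)" for k
  define c where "c = (-1) ^ (n - 1) * lam 1"
  have J: "finite {1..n}" "{1..n} \<noteq> {}" using n by auto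
  have "c \<noteq> 0" using lam[of 1] n by (simp add: c_def)
  have "\<bar>A k\<bar> \<le> (\<Sum>\<kappa>\<in>compositions {1..n} k. \<bar>comp_coeff lam {1..n} \<kappa>\<bar> * gamma_kernel (comp_order nu {1..n} \<kappa>) t)" for k
  proof -
    have "\<bar>A k\<bar> \<le> (\<Sum>\<kappa>\<in>compositions {1..n} k. \<bar>comp_coeff lam {1..n} \<kappa> * gamma_kernel (comp_order nu {1..n} \<kappa>) t\<bar>)"
      unfolding A_def by (rule sum_abs)
    also have "\<dots> = (\<Sum>\<kappa>\<in>compositions {1..n} k. \<bar>comp_coeff lam {1..n} \<kappa>\<bar> * gamma_kernel (comp_order nu {1..n} \<kappa>) t)"
    proof (rule sum.cong[OF refl])
      fix \<kappa> assume "\<kappa> \<in> compositions {1..n} k"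
      then have "0 < comp_order nu {1..n} \<kappa>" using comp_order_pos[OF J] nu by blast
      then show "\<bar>comp_coeff lam {1..n} \<kappa> * gamma_kernel (comp_order nu {1..n} \<kappa>) t\<bar> =
          \<bar>comp_coeff lam {1..n} \<kappa>\<bar> * gamma_kernel (comp_order nu {1..n} \<kappa>) t"
        by (simp add: abs_mult abs_of_nonneg[OF gamma_kernel_nonneg])
    qed
    finally show ?thesis .
  qed
  then have "summable (\<lambda>k. \<bar>A k\<bar>)"
    by (intro summable_comparison_test'[OF summable_ml_sum_density_terms[OF J lam nu]]) auto
  then have "summable A" by (rule summable_rabs_cancel)
  then have summable_shift: "summable (\<lambda>m. A (m + n))" by (subst summable_iff_shift)
  have A_eq_0: "A k = 0" if "k < n" for k
    using compositions_eq_empty[OF J(1)] that by (simp add: A_def)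
  have A_shift: "A (m + n) = c * fW_term n lam nu t (m + (n - 1))" for m
    unfolding A_def c_def by (rule sum_compositions_eq_fW_term[where lam = lam and nu = nu, OF n t nu_1 lam_n])
  show summable: "summable (\<lambda>m. fW_term n lam nu t (m + (n - 1)))"
    using summable_mult[OF summable_shift[unfolded A_shift], of "1 / c"] \<open>c \<noteq> 0\<close> by simp
  have "ml_sum_density lam nu {1..n} t = (\<Sum>m. A (m + n)) + (\<Sum>k<n. A k)"
    unfolding ml_sum_density_def A_def[symmetric] by (rule suminf_split_initial_segment[OF \<open>summable A\<close>])
  also have "(\<Sum>k<n. A k) = 0" by (simp add: A_eq_0)
  also have "(\<Sum>m. A (m + n)) = (\<Sum>m. c * fW_term n lam nu t (m + (n - 1)))" by (simp only: A_shift)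
  also have "\<dots> = c * (\<Sum>m. fW_term n lam nu t (m + (n - 1)))" by (rule suminf_mult[OF summable])
  finally show "ml_sum_density lam nu {1..n} t = (-1) ^ (n - 1) * lam 1 * (\<Sum>m. fW_term n lam nu t (m + (n - 1)))"
    by (simp add: c_def)
qed

lemma fW_term_at_zero:
  assumes n: "1 \<le> n" and m: "1 \<le> m" and nu: "\<And>j. j \<in> {1..n} \<Longrightarrow> 0 < nu j"
  shows "fW_term n lam nu 0 (m + (n - 1)) = 0"
proof -
  have "real (\<kappa> 1) + (\<Sum>j=2..n. real (\<kappa> j) * nu j) \<noteq> 0" if \<kappa>: "\<kappa> \<in> Lambda_set n (m + (n - 1))" for \<kappa>
  proof
    have nonneg: "\<forall>j\<in>{2..n}. 0 \<le> real (\<kappa> j) * nu j" using nu by (simp add: less_imp_le)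
    assume "real (\<kappa> 1) + (\<Sum>j=2..n. real (\<kappa> j) * nu j) = 0"
    moreover have "0 \<le> (\<Sum>j=2..n. real (\<kappa> j) * nu j)" using nonneg by (intro sum_nonneg) auto
    ultimately have "\<kappa> 1 = 0" and "(\<Sum>j=2..n. real (\<kappa> j) * nu j) = 0" by linarith+
    then have "\<forall>j\<in>{2..n}. real (\<kappa> j) * nu j = 0"
      using nonneg by (subst (asm) sum_nonneg_eq_0_iff) auto
    moreover have "0 < nu j" if "j \<in> {2..n}" for j using nu that by simp
    ultimately have "\<forall>j\<in>{2..n}. \<kappa> j = 0" by (metis less_irrefl mult_eq_0_iff of_nat_eq_0_iff)
    with \<open>\<kappa> 1 = 0\<close> have "(\<Sum>j=1..n. \<kappa> j) = 0"
      using n by (simp add: sum.atLeast_Suc_atMost numeral_2_eq_2)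
    then show False using \<kappa> m by (simp add: Lambda_set_def)
  qed
  then show ?thesis by (simp add: fW_term_def pow0_def)
qed

theorem corollary5p2:
  fixes M :: "'a measure" and Y :: "nat \<Rightarrow> 'a \<Rightarrow> real"
    and n :: nat and lam nu :: "nat \<Rightarrow> real"
  assumes "prob_space M"
    and "n \<ge> 1"
    and "\<And>j. j \<in> {1..n} \<Longrightarrow> Y j \<in> borel_measurable M"
    and "prob_space.indep_vars M (\<lambda>_. borel) Y {1..n}"
    and "\<And>j. j \<in> {1..n} \<Longrightarrow> lam j > 0"
    and "\<And>j. j \<in> {1..n} \<Longrightarrow> 0 < nu j \<and> nu j \<le> 1"
    and "nu 1 = 1" and "lam n = 1"
    and "\<And>j t. j \<in> {1..n} \<Longrightarrow> 0 \<le> t \<Longrightarrow>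
           measure M {x \<in> space M. Y j x \<le> t} = 1 - mittag_leffler (nu j) (- lam j * t powr nu j)"
  shows "(\<forall>t\<ge>0. summable (\<lambda>m. fW_term n lam nu t (m + (n - 1)))) \<and>
         distributed M lborel (\<lambda>x. \<Sum>j=1..n. Y j x)
           (\<lambda>t. ennreal (if 0 \<le> t
                  then (-1) ^ (n - 1) * lam 1 * (\<Sum>m. fW_term n lam nu t (m + (n - 1)))
                  else 0))"
proof -
  interpret prob_space M by fact
  have n: "1 \<le> n" and lam: "\<And>j. j \<in> {1..n} \<Longrightarrow> 0 < lam j" and nu: "\<And>j. j \<in> {1..n} \<Longrightarrow> 0 < nu j \<and> nu j \<le> 1"
    using assms(2,5,6) by auto
  note series = ml_sum_density_eq_fW_series[where lam = lam and nu = nu, OF n _ assms(7,8) lam nu]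
  have "(\<forall>t. 0 \<le> ml_sum_density lam nu {j} t) \<and> distributed M lborel (Y j) (\<lambda>t. ennreal (ml_sum_density lam nu {j} t))"
    if "j \<in> {1..n}" for j
    using that lam nu assms(3,9) by (intro ml_distributed) auto
  then have distributed: "distributed M lborel (\<lambda>x. \<Sum>j=1..n. Y j x) (\<lambda>t. ennreal (ml_sum_density lam nu {1..n} t))"
    using n assms(4) lam nu by (intro ml_sum_distributed[THEN conjunct2]) auto
  have density_eq: "(if 0 \<le> t then (-1) ^ (n - 1) * lam 1 * (\<Sum>m. fW_term n lam nu t (m + (n - 1))) else 0) =
      ml_sum_density lam nu {1..n} t" if "t \<noteq> 0" for t
    using that series(2)[of t] by (cases "0 < t") (auto simp: ml_sum_density_nonpos)
  have "summable (\<lambda>m. fW_term n lam nu t (m + (n - 1)))" if "0 \<le> t" for t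
  proof (cases "t = 0")
    case True
    then show ?thesis
      using fW_term_at_zero[OF n _, of _ nu lam] nu by (intro summable_finite[of "{0}"]) auto
  qed (use that series(1) in auto)
  with distributed_cong_density_except_point[OF distributed borel_measurable_ml_sum_density density_eq]
  show ?thesis by simp
qed

end
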